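(* Let $B$ be a lattice and $p\colon X\to B$ a presheaf of sets over $B$ with global support. Suppose that $x,y\in X$ satisfy $x\sim y$ and that the join $x\vee y$ exists in $(X,\le)$. Then $p(x\vee y)=p(x)\vee p(y)$.
   Context: Presheaf of sets over a meet semilattice $E$: for each $e\in E$ a set $X_e$, pairwise disjoint, and for $e\ge f$ a restriction map $x\mapsto x|^e_f$ from $X_e$ to $X_f$ with $|^e_e=\mathrm{id}$ and $(x|^e_f)|^f_g=x|^e_g$ for $e\ge f\ge g$; $X=\bigcup X_e$ and $p(x)=e$ iff $x\in X_e$. Global support: all $X_e$ non-empty. Partial order on $X$: $x\le y$ iff $p(x)\le p(y)$ and $x=y|^{p(y)}_{p(x)}$. Compatibility: $x\sim y$ iff the meet $x\wedge y$ exists in $(X,\le)$ and $p(x\wedge y)=p(x)\wedge p(y)$. *)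

theory Defs
  imports Main
begin

text \<open>X :: 'x set is the total set, p :: 'x => 'e the projection (so X_e = {x in X. p x = e},
  automatically pairwise disjoint), and res e f x stands for the restriction x|^e_f.\<close>

definition presheaf :: "'x set \<Rightarrow> ('x \<Rightarrow> 'e::semilattice_inf) \<Rightarrow> ('e \<Rightarrow> 'e \<Rightarrow> 'x \<Rightarrow> 'x) \<Rightarrow> bool" where
  "presheaf X p res \<longleftrightarrow>
     (\<forall>x\<in>X. \<forall>f. f \<le> p x \<longrightarrow> res (p x) f x \<in> X \<and> p (res (p x) f x) = f)
   \<and> (\<forall>x\<in>X. res (p x) (p x) x = x)
   \<and> (\<forall>x\<in>X. \<forall>f g. g \<le> f \<and> f \<le> p x \<longrightarrow> res f g (res (p x) f x) = res (p x) g x)"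

definition global_support :: "'x set \<Rightarrow> ('x \<Rightarrow> 'e) \<Rightarrow> bool" where
  "global_support X p \<longleftrightarrow> (\<forall>e. \<exists>x\<in>X. p x = e)"

definition pleq :: "('x \<Rightarrow> 'e::order) \<Rightarrow> ('e \<Rightarrow> 'e \<Rightarrow> 'x \<Rightarrow> 'x) \<Rightarrow> 'x \<Rightarrow> 'x \<Rightarrow> bool" where
  "pleq p res x y \<longleftrightarrow> p x \<le> p y \<and> x = res (p y) (p x) y"

definition is_pmeet :: "'x set \<Rightarrow> ('x \<Rightarrow> 'e::order) \<Rightarrow> ('e \<Rightarrow> 'e \<Rightarrow> 'x \<Rightarrow> 'x) \<Rightarrow> 'x \<Rightarrow> 'x \<Rightarrow> 'x \<Rightarrow> bool" where
  "is_pmeet X p res x y m \<longleftrightarrow> m \<in> X \<and> pleq p res m x \<and> pleq p res m y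
     \<and> (\<forall>z\<in>X. pleq p res z x \<and> pleq p res z y \<longrightarrow> pleq p res z m)"

definition is_pjoin :: "'x set \<Rightarrow> ('x \<Rightarrow> 'e::order) \<Rightarrow> ('e \<Rightarrow> 'e \<Rightarrow> 'x \<Rightarrow> 'x) \<Rightarrow> 'x \<Rightarrow> 'x \<Rightarrow> 'x \<Rightarrow> bool" where
  "is_pjoin X p res x y j \<longleftrightarrow> j \<in> X \<and> pleq p res x j \<and> pleq p res y j
     \<and> (\<forall>z\<in>X. pleq p res x z \<and> pleq p res y z \<longrightarrow> pleq p res j z)"

definition compatible :: "'x set \<Rightarrow> ('x \<Rightarrow> 'e::semilattice_inf) \<Rightarrow> ('e \<Rightarrow> 'e \<Rightarrow> 'x \<Rightarrow> 'x) \<Rightarrow> 'x \<Rightarrow> 'x \<Rightarrow> bool" where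
  "compatible X p res x y \<longleftrightarrow> (\<exists>m. is_pmeet X p res x y m \<and> p m = inf (p x) (p y))"

end

theory Submission
  imports Defs
begin

text \<open>Restricting the join j to the level p x \<squnion> p y \<le> p j gives another upper bound of x and y,
  so j lies below it and p j \<le> p x \<squnion> p y.\<close>

lemma presheaf_restrict_in:
  assumes "presheaf X p res" "z \<in> X" "e \<le> p z"
  shows "res (p z) e z \<in> X" and "p (res (p z) e z) = e"
  using assms unfolding presheaf_def by auto

lemma presheaf_restrict_trans:
  assumes "presheaf X p res" "z \<in> X" "g \<le> e" "e \<le> p z"
  shows "res e g (res (p z) e z) = res (p z) g z"
  using assms unfolding presheaf_def by auto

lemma pleq_restrict_above:
  assumes "presheaf X p res" "z \<in> X" "pleq p res x z" "p x \<le> e" "e \<le> p z"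
  shows "pleq p res x (res (p z) e z)"
  using assms presheaf_restrict_in[OF assms(1,2,5)] presheaf_restrict_trans[OF assms(1,2,4,5)]
  unfolding pleq_def by simp

lemma is_pjoin_proj_sup:
  fixes p :: "'x \<Rightarrow> 'b::lattice"
  assumes sheaf: "presheaf X p res" and join: "is_pjoin X p res x y j"
  shows "p j = sup (p x) (p y)"
proof -
  define e where "e = sup (p x) (p y)"
  have jX: "j \<in> X" and xj: "pleq p res x j" and yj: "pleq p res y j"
    using join unfolding is_pjoin_def by auto
  have e_le: "e \<le> p j"
    using xj yj unfolding e_def pleq_def by simp
  define z where "z = res (p j) e j"
  have zX: "z \<in> X" and pz: "p z = e"
    using presheaf_restrict_in[OF sheaf jX e_le] unfolding z_def by auto
  have "pleq p res x z" "pleq p res y z"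
    using pleq_restrict_above[OF sheaf jX _ _ e_le] xj yj unfolding z_def e_def by auto
  with join zX have "pleq p res j z"
    unfolding is_pjoin_def by blast
  then have "p j \<le> e"
    using pz unfolding pleq_def by simp
  with e_le show ?thesis
    unfolding e_def by (simp add: order.antisym)
qed

theorem lemma1p7:
  fixes X :: "'x set" and p :: "'x \<Rightarrow> 'b::lattice" and res :: "'b \<Rightarrow> 'b \<Rightarrow> 'x \<Rightarrow> 'x"
    and x y j :: 'x
  assumes "presheaf X p res"
    and "global_support X p"
    and "x \<in> X" and "y \<in> X"
    and "compatible X p res x y"
    and "is_pjoin X p res x y j"
  shows "p j = sup (p x) (p y)"
  using is_pjoin_proj_sup[OF assms(1,6)] .

end
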